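(* Let $\mathcal{H}$ be a finite-dimensional complex Hilbert space and $A,B$ linear operators on $\mathcal{H}$ with $\|A\|\le1$, $\|B\|\le1$ (operator norms), such that $1$ is an eigenvalue of $A$ and of $B$ and there is a nonzero $\rho_1\in\mathcal{H}$ with $A^*\rho_1=\rho_1$ and $B^*\rho_1=\rho_1$. Let $0<p,q<1$, $p+q=1$, and $\mathcal{L}=qA+pB$. If $\lambda=1$ is the only eigenvalue of $B$ with $|\lambda|=1$, then $\lambda=1$ is also the only eigenvalue of $\mathcal{L}$ with $|\lambda|=1$. *)

theory Defs
  imports "HOL-Analysis.Analysis"
begin

text \<open>The finite-dimensional complex Hilbert space is modelled as complex^'n with the
standard (Euclidean, l2) norm; operators are matrices complex^'n^'n acting by *v.\<close>

definition adjoint_mat :: "complex^'n^'n \<Rightarrow> complex^'n^'n" where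
  "adjoint_mat A = (\<chi> i j. cnj (A $ j $ i))"

definition is_eigenvalue :: "complex^'n^'n \<Rightarrow> complex \<Rightarrow> bool" where
  "is_eigenvalue A l \<longleftrightarrow> (\<exists>v. v \<noteq> 0 \<and> A *v v = l *s v)"

end

theory Submission imports Defs begin

text \<open>Euclidean space is strictly convex: if \<open>A v\<close> and \<open>B v\<close> both have norm at most \<open>\<parallel>v\<parallel>\<close>
  and the proper convex combination \<open>q A v + p B v = \<lambda> v\<close> with \<open>|\<lambda>| = 1\<close> has norm exactly
  \<open>\<parallel>v\<parallel>\<close>, then \<open>A v = B v\<close>. Hence \<open>v\<close> is an eigenvector of \<open>B\<close> for \<open>\<lambda>\<close>, and \<open>\<lambda> = 1\<close> by the
  hypothesis on the peripheral spectrum of \<open>B\<close>.\<close>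

lemma norm_convex_combination_power2:
  fixes x y :: "'a::real_inner" and p q :: real
  assumes "p + q = 1"
  shows "(norm (q *\<^sub>R x + p *\<^sub>R y))\<^sup>2
           = q * (norm x)\<^sup>2 + p * (norm y)\<^sup>2 - p * q * (norm (x - y))\<^sup>2"
proof -
  have lhs: "(norm (q *\<^sub>R x + p *\<^sub>R y))\<^sup>2 = q*q*(x\<bullet>x) + 2*p*q*(x\<bullet>y) + p*p*(y\<bullet>y)"
    unfolding power2_norm_eq_inner
    by (simp add: inner_add_left inner_add_right inner_commute[of y x] algebra_simps)
  have diff: "(norm (x - y))\<^sup>2 = x\<bullet>x - 2*(x\<bullet>y) + y\<bullet>y"
    unfolding power2_norm_eq_inner
    by (simp add: inner_diff_left inner_diff_right inner_commute[of y x])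
  have q: "q = 1 - p" using assms by simp
  show ?thesis
    unfolding lhs diff power2_norm_eq_inner q by (simp add: algebra_simps)
qed

lemma eq_if_norm_convex_combination_eq_bound:
  fixes x y :: "'a::real_inner" and p q r :: real
  assumes "norm x \<le> r" and "norm y \<le> r" and "norm (q *\<^sub>R x + p *\<^sub>R y) = r"
    and "0 < p" and "0 < q" and "p + q = 1"
  shows "x = y"
proof -
  have "0 \<le> r" using assms(1) norm_ge_zero order_trans by blast
  then have "(norm x)\<^sup>2 \<le> r\<^sup>2" "(norm y)\<^sup>2 \<le> r\<^sup>2"
    using assms(1,2) by (simp_all add: power_mono)
  then have "q * (norm x)\<^sup>2 + p * (norm y)\<^sup>2 \<le> q * r\<^sup>2 + p * r\<^sup>2"
    using assms(4,5) by (intro add_mono mult_left_mono) simp_all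
  also have "\<dots> = (p + q) * r\<^sup>2" by (simp add: algebra_simps)
  also have "\<dots> = r\<^sup>2" using assms(6) by simp
  finally have "p * q * (norm (x - y))\<^sup>2 \<le> 0"
    using norm_convex_combination_power2[OF assms(6), of x y] assms(3) by simp
  moreover have "0 < p * q" using assms(4,5) by simp
  ultimately have "(norm (x - y))\<^sup>2 \<le> 0"
    by (metis mult_le_0_iff not_less)
  then show "x = y" by simp
qed

lemma norm_matrix_vector_mult_le:
  fixes A :: "complex^'n^'m"
  assumes "onorm (\<lambda>x. A *v x) \<le> 1"
  shows "norm (A *v v) \<le> norm v"
proof -
  have "norm (A *v v) \<le> onorm (\<lambda>x. A *v x) * norm v"
    by (rule onorm) simp
  also have "\<dots> \<le> norm v"
    using mult_right_mono[OF assms norm_ge_zero] by simp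
  finally show ?thesis .
qed

lemma matrix_vector_mult_scaleR:
  fixes A :: "'a::real_algebra_1^'n^'m"
  shows "(c *\<^sub>R A) *v x = c *\<^sub>R (A *v x)"
  by (simp add: vec_eq_iff matrix_vector_mult_def scaleR_sum_right)

lemma norm_vector_scalar_mult:
  fixes v :: "'a::real_normed_div_algebra^'n"
  shows "norm (c *s v) = norm c * norm v"
  by (simp add: norm_vec_def norm_mult L2_set_right_distrib)

lemma is_eigenvalue_convex_combination_unimodular:
  fixes A B :: "complex^'n^'n" and p q :: real
  assumes "onorm (\<lambda>x. A *v x) \<le> 1" and "onorm (\<lambda>x. B *v x) \<le> 1"
    and "0 < p" and "0 < q" and "p + q = 1"
    and "is_eigenvalue (q *\<^sub>R A + p *\<^sub>R B) l" and "cmod l = 1"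
  shows "is_eigenvalue B l"
proof -
  obtain v where "v \<noteq> 0" and eigen: "(q *\<^sub>R A + p *\<^sub>R B) *v v = l *s v"
    using assms(6) unfolding is_eigenvalue_def by blast
  have combination: "q *\<^sub>R (A *v v) + p *\<^sub>R (B *v v) = l *s v"
    using eigen by (simp add: matrix_vector_mult_add_rdistrib matrix_vector_mult_scaleR)
  have "A *v v = B *v v"
  proof (rule eq_if_norm_convex_combination_eq_bound)
    show "norm (q *\<^sub>R (A *v v) + p *\<^sub>R (B *v v)) = norm v"
      unfolding combination using assms(7) by (simp add: norm_vector_scalar_mult)
  qed (use assms norm_matrix_vector_mult_le in auto)
  then have "B *v v = l *s v"
    using combination assms(5) by (metis add.commute scaleR_add_left scaleR_one)
  then show ?thesis
    using \<open>v \<noteq> 0\<close> unfolding is_eigenvalue_def by blast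
qed

theorem mainTheorem4:
  fixes A B :: "complex^'n^'n" and \<rho>1 :: "complex^'n" and p q :: real
  assumes "onorm (\<lambda>x. A *v x) \<le> 1" and "onorm (\<lambda>x. B *v x) \<le> 1"
    and "is_eigenvalue A 1" and "is_eigenvalue B 1"
    and "\<rho>1 \<noteq> 0" and "adjoint_mat A *v \<rho>1 = \<rho>1" and "adjoint_mat B *v \<rho>1 = \<rho>1"
    and "0 < p" and "p < 1" and "0 < q" and "q < 1" and "p + q = 1"
    and "\<forall>l. is_eigenvalue B l \<and> cmod l = 1 \<longrightarrow> l = 1"
  shows "\<forall>l. is_eigenvalue (q *\<^sub>R A + p *\<^sub>R B) l \<and> cmod l = 1 \<longrightarrow> l = 1"
  using is_eigenvalue_convex_combination_unimodular[OF assms(1,2,8,10,12)] assms(13)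
  by blast

end
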